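(* For all even $m\geq 2$ one has \begin{enumerate} \item $S_m^0\odot \mu = -S_m^0\,\mu$; \item The mapping $(\mathbb{Q}^\mathscr{P},\odot)\to(\mathbb{Q}^\mathscr{P},\odot),\ f\mapsto S_m\,|\, f$ is a derivation, uniquely determined on $\mathcal{T}$ by $S_m\,|\, T_{k,l} = T_{k+m-1,l+1}$. \end{enumerate}
   Context: $\mathscr{P}$ is the set of partitions and $r_m(\lambda)$ the number of parts of $\lambda$ equal to $m$. $S_m(\lambda)=-\frac{B_m}{2m}+\sum_i\lambda_i^{m-1}$ for even $m$, and $S_m^0=S_m-S_m(\emptyset)$. $\mu:\mathscr{P}\to\{-1,0,1\}$ is given by $\mu(\lambda)=(-1)^{\ell(\lambda)}$ if $\lambda$ is strict (no repeated parts) and $0$ otherwise; $S_m^0\mu$ is the pointwise product. The induced product $\odot$ is defined by $\langle f\odot g\rangle_{\vec u}=\langle f\rangle_{\vec u}\langle g\rangle_{\vec u}$ with $\langle f\rangle_{\vec u}=\sum_\lambda f(\lambda)u_{\lambda_1}u_{\lambda_2}\cdots/\sum_\lambda u_{\lambda_1}u_{\lambda_2}\cdots$; equivalently $(f\odot g)(\lambda)=\sum_{\alpha\cup\beta\cup\gamma=\lambda}f(\alpha)g(\beta)\mu(\gamma)$ (multiset unions). The connected product of two functions is $S_m|f=S_mf-S_m\odot f$. The Faulhaber polynomial $F_l$ is the polynomial with zero constant term with $F_l(n)=\sum_{i=1}^n i^{l-1}$ for $n\ge1$; $T_{k,l}(\lambda)=-\frac{B_{k+l}}{2(k+l)}(\delta_{l,1}+\delta_{k,0})+\sum_{m'\ge1}m'^kF_l(r_{m'}(\lambda))$,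 and $\mathcal{T}$ is the algebra generated by the $T_{k,l}$, which has a basis of induced products $T_{k_1,l_1}\odot\cdots\odot T_{k_n,l_n}$. *)

theory Defs
  imports Complex_Main "HOL-Library.Multiset"
begin

text \<open>Partitions are finite multisets of positive integers; a partition
  lambda is the multiset of its parts, so r_m(lambda) = count lambda m.
  Functions on partitions (elements of Q^P) are represented as
  functions nat multiset => rat; only their values on partitions matter.\<close>

definition partitions :: "nat multiset set" where
  "partitions = {lam. 0 \<notin># lam}"

text \<open>Bernoulli numbers (convention B_1 = -1/2), via the standard recursion
  sum_{k=0}^{n} C(n+1,k) B_k = 0 for n >= 1, B_0 = 1.\<close>

fun bernoulli :: "nat \<Rightarrow> rat" where
  "bernoulli n = (if n = 0 then 1 else
     - (\<Sum>k<n. of_nat ((n + 1) choose k) * bernoulli k) / of_nat (n + 1))"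

definition is_strict :: "nat multiset \<Rightarrow> bool" where
  "is_strict lam = (\<forall>x. count lam x \<le> 1)"

definition mu :: "nat multiset \<Rightarrow> rat" where
  "mu lam = (if is_strict lam then (-1) ^ size lam else 0)"

definition odot :: "(nat multiset \<Rightarrow> rat) \<Rightarrow> (nat multiset \<Rightarrow> rat) \<Rightarrow> nat multiset \<Rightarrow> rat"
  (infixl "\<odot>" 70) where
  "(f \<odot> g) lam = (\<Sum>alpha\<in>{alpha. alpha \<subseteq># lam}. \<Sum>beta\<in>{beta. beta \<subseteq># lam - alpha}.
                     f alpha * g beta * mu (lam - alpha - beta))"

definition S :: "nat \<Rightarrow> nat multiset \<Rightarrow> rat" where
  "S m lam = - bernoulli m / (2 * of_nat m) + sum_mset (image_mset (\<lambda>x. of_nat x ^ (m - 1)) lam)"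

definition S0 :: "nat \<Rightarrow> nat multiset \<Rightarrow> rat" where
  "S0 m lam = S m lam - S m {#}"

definition conn :: "nat \<Rightarrow> (nat multiset \<Rightarrow> rat) \<Rightarrow> nat multiset \<Rightarrow> rat" where
  "conn m f = (\<lambda>lam. S m lam * f lam - (S m \<odot> f) lam)"

text \<open>Faulhaber polynomial F_l (l >= 1) evaluated at a natural number n:
  F_l(n) = sum_{i=1}^n i^(l-1) (for n = 0 this is 0, the constant term).\<close>
definition faulhaber :: "nat \<Rightarrow> nat \<Rightarrow> rat" where
  "faulhaber l n = (\<Sum>i=1..n. of_nat i ^ (l - 1))"

text \<open>T_{k,l}; the sum over m' >= 1 reduces to the parts of lambda since F_l(0) = 0.\<close>
definition T :: "nat \<Rightarrow> nat \<Rightarrow> nat multiset \<Rightarrow> rat" where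
  "T k l lam = - bernoulli (k + l) / (2 * of_nat (k + l))
                 * ((if l = 1 then 1 else 0) + (if k = 0 then 1 else 0))
               + (\<Sum>m'\<in>set_mset lam. of_nat m' ^ k * faulhaber l (count lam m'))"

inductive_set Tcal :: "(nat multiset \<Rightarrow> rat) set" where
  const: "(\<lambda>_. c) \<in> Tcal"
| gen: "l \<ge> 1 \<Longrightarrow> T k l \<in> Tcal"
| add: "f \<in> Tcal \<Longrightarrow> g \<in> Tcal \<Longrightarrow> (\<lambda>lam. f lam + g lam) \<in> Tcal"
| smult: "f \<in> Tcal \<Longrightarrow> (\<lambda>lam. c * f lam) \<in> Tcal"
| prod: "f \<in> Tcal \<Longrightarrow> g \<in> Tcal \<Longrightarrow> f \<odot> g \<in> Tcal"

definition is_odot_derivation :: "((nat multiset \<Rightarrow> rat) \<Rightarrow> (nat multiset \<Rightarrow> rat)) \<Rightarrow> bool" where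
  "is_odot_derivation D \<longleftrightarrow>
     (\<forall>a b f g. \<forall>lam\<in>partitions.
        D (\<lambda>x. a * f x + b * g x) lam = a * D f lam + b * D g lam) \<and>
     (\<forall>f g. \<forall>lam\<in>partitions. D (f \<odot> g) lam = (D f \<odot> g) lam + (f \<odot> D g) lam)"

end

theory Submission
  imports Defs "HOL-Library.Function_Algebras"
begin

text \<open>
  Write \<open>f \<star> g\<close> for the convolution over submultisets. It is a commutative monoid
  with unit \<open>mset_delta\<close>, and \<open>mu\<close> is the \<open>\<star>\<close>-inverse of the constant \<open>1\<close>
  (inclusion-exclusion over strict submultisets), so that \<open>f \<odot> g = f \<star> g \<star> mu\<close>.
  As \<open>S0 m\<close> is additive on multisets, multiplication by it is a derivation of \<open>\<star>\<close>.
  Applied to \<open>1 \<star> mu = mset_delta\<close> this gives part (1), and, since the constant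
  \<open>S m {#}\<close> drops out of \<open>conn m f = S0 m * f - S0 m \<star> mu \<star> f\<close>, the Leibniz rule.
  Up to its value at \<open>{#}\<close>, \<open>T k l\<close> is \<open>power_block k l \<star> 1\<close>, where \<open>power_block k l\<close>
  takes the value \<open>n^k r^(l-1)\<close> on the multiset of \<open>r\<close> copies of \<open>n\<close> and vanishes
  elsewhere; multiplying it by \<open>S0 m\<close> shifts \<open>(k, l)\<close> to \<open>(k + m - 1, l + 1)\<close>, and
  \<open>conn m (f \<star> 1) = (S0 m * f) \<star> 1\<close>.
\<close>

section \<open>Convolution over submultisets\<close>

lemma finite_submultisets: "finite {a. a \<subseteq># M}"
proof (rule finite_subset)
  show "{a. a \<subseteq># M} \<subseteq> mset ` {xs. set xs \<subseteq> set_mset M \<and> length xs \<le> size M}"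
  proof
    fix a assume "a \<in> {a. a \<subseteq># M}"
    moreover obtain xs where "a = mset xs" by (metis ex_mset)
    ultimately show "a \<in> mset ` {xs. set xs \<subseteq> set_mset M \<and> length xs \<le> size M}"
      by (auto intro!: image_eqI dest: mset_subset_eqD size_mset_mono)
  qed
  show "finite (mset ` {xs. set xs \<subseteq> set_mset M \<and> length xs \<le> size M})"
    by (intro finite_imageI finite_lists_length_le) simp
qed

lemma sum_nested_submultisets:
  "(\<Sum>c\<in>{c. c \<subseteq># M}. \<Sum>a\<in>{a. a \<subseteq># c}. F a (c - a) (M - c)) =
   (\<Sum>a\<in>{a. a \<subseteq># M}. \<Sum>b\<in>{b. b \<subseteq># M - a}. F a b (M - a - b))"
proof -
  have "(\<Sum>c\<in>{c. c \<subseteq># M}. \<Sum>a\<in>{a. a \<subseteq># c}. F a (c - a) (M - c)) =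
      (\<Sum>(c, a)\<in>Sigma {c. c \<subseteq># M} (\<lambda>c. {a. a \<subseteq># c}). F a (c - a) (M - c))"
    by (rule sum.Sigma) (auto simp: finite_submultisets)
  also have "\<dots> = (\<Sum>(a, b)\<in>Sigma {a. a \<subseteq># M} (\<lambda>a. {b. b \<subseteq># M - a}). F a b (M - a - b))"
    by (rule sum.reindex_bij_witness[where i = "\<lambda>(a, b). (a + b, a)" and j = "\<lambda>(c, a). (a, c - a)"])
       (auto simp: subset_mset.le_diff_conv2 add.commute subset_eq_diff_conv
             intro: subset_mset.order_trans)
  also have "\<dots> = (\<Sum>a\<in>{a. a \<subseteq># M}. \<Sum>b\<in>{b. b \<subseteq># M - a}. F a b (M - a - b))"
    by (rule sum.Sigma [symmetric]) (auto simp: finite_submultisets)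
  finally show ?thesis .
qed

definition mset_conv ::
    "('a multiset \<Rightarrow> 'b::comm_semiring_1) \<Rightarrow> ('a multiset \<Rightarrow> 'b) \<Rightarrow> 'a multiset \<Rightarrow> 'b"
    (infixl "\<star>" 70) where
  "(f \<star> g) M = (\<Sum>a\<in>{a. a \<subseteq># M}. f a * g (M - a))"

definition mset_delta :: "'a multiset \<Rightarrow> 'b::comm_semiring_1" where
  "mset_delta M = (if M = {#} then 1 else 0)"

lemma mset_conv_commute: "f \<star> g = g \<star> f"
proof
  fix M
  show "(f \<star> g) M = (g \<star> f) M"
    unfolding mset_conv_def
    by (rule sum.reindex_bij_witness[where i = "\<lambda>a. M - a" and j = "\<lambda>a. M - a"])
       (auto simp: subset_mset.diff_diff_right mult.commute)
qed

lemma mset_conv_assoc: "f \<star> g \<star> h = f \<star> (g \<star> h)"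
proof
  fix M
  have "(f \<star> g \<star> h) M = (\<Sum>c\<in>{c. c \<subseteq># M}. \<Sum>a\<in>{a. a \<subseteq># c}. f a * g (c - a) * h (M - c))"
    unfolding mset_conv_def by (simp add: sum_distrib_right)
  also have "\<dots> = (\<Sum>a\<in>{a. a \<subseteq># M}. \<Sum>b\<in>{b. b \<subseteq># M - a}. f a * g b * h (M - a - b))"
    by (rule sum_nested_submultisets)
  also have "\<dots> = (f \<star> (g \<star> h)) M"
    unfolding mset_conv_def by (simp add: sum_distrib_left mult.assoc)
  finally show "(f \<star> g \<star> h) M = (f \<star> (g \<star> h)) M" .
qed

lemma mset_conv_delta_right: "f \<star> mset_delta = f"
proof
  fix M
  have "(f \<star> mset_delta) M = (\<Sum>a\<in>{a. a \<subseteq># M}. if a = M then f M else 0)"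
    unfolding mset_conv_def mset_delta_def
    by (rule sum.cong) (auto simp: subset_mset.antisym Diff_eq_empty_iff_mset)
  then show "(f \<star> mset_delta) M = f M"
    by (simp add: finite_submultisets)
qed

interpretation mset_conv: comm_monoid "(\<star>)" mset_delta
  by unfold_locales (fact mset_conv_assoc, fact mset_conv_commute, fact mset_conv_delta_right)

lemma mset_conv_add_left: "(f + g) \<star> h = f \<star> h + g \<star> h"
  by (rule ext) (simp add: mset_conv_def sum.distrib algebra_simps)

lemma mset_conv_add_right: "h \<star> (f + g) = h \<star> f + h \<star> g"
  by (simp add: mset_conv.commute[of h] mset_conv_add_left)

lemma mset_conv_diff_left: "(f - g) \<star> h = f \<star> h - g \<star> h"
  for f g :: "'a multiset \<Rightarrow> 'b::comm_ring_1"
  by (rule ext) (simp add: mset_conv_def sum_subtractf algebra_simps)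

lemma mset_conv_diff_right: "h \<star> (f - g) = h \<star> f - h \<star> g"
  for f g :: "'a multiset \<Rightarrow> 'b::comm_ring_1"
  by (simp add: mset_conv.commute[of h] mset_conv_diff_left)

lemma mset_conv_minus_left: "(- f) \<star> g = - (f \<star> g)"
  for f g :: "'a multiset \<Rightarrow> 'b::comm_ring_1"
  by (rule ext) (simp add: mset_conv_def sum_negf)

lemma mset_conv_minus_right: "g \<star> (- f) = - (g \<star> f)"
  for f g :: "'a multiset \<Rightarrow> 'b::comm_ring_1"
  by (simp add: mset_conv.commute[of g] mset_conv_minus_left)

lemma mset_conv_scale_left: "(\<lambda>M. c * f M) \<star> g = (\<lambda>M. c * (f \<star> g) M)"
  by (rule ext) (simp add: mset_conv_def sum_distrib_left mult.assoc)

lemma mset_conv_cong: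
  assumes "\<And>a. a \<subseteq># M \<Longrightarrow> f a = f' a" "\<And>b. b \<subseteq># M \<Longrightarrow> g b = g' b"
  shows "(f \<star> g) M = (f' \<star> g') M"
  unfolding mset_conv_def by (rule sum.cong) (simp_all add: assms)

section \<open>Moebius inversion and the induced product\<close>

lemma sum_Pow_neg_one_power:
  assumes "finite X"
  shows "(\<Sum>A\<in>Pow X. (-1::'b::comm_ring_1) ^ card A) = (if X = {} then 1 else 0)"
  using prod_diff_conv_sum[OF assms, of "\<lambda>_. 1" "\<lambda>_. 1"] assms
  by (cases "X = {}") (simp_all add: power_0_left card_eq_0_iff)

lemma strict_multiset_eq_mset_set: "is_strict a \<Longrightarrow> mset_set (set_mset a) = a"
  unfolding is_strict_def
  by (rule multiset_eqI) (metis count_eq_zero_iff count_mset_set' finite_set_mset le_neq_implies_less less_one)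

lemma mset_conv_one_mu: "1 \<star> mu = mset_delta"
proof
  fix M :: "nat multiset"
  have "(1 \<star> mu) M = (\<Sum>a\<in>{a. a \<subseteq># M}. mu a)"
    by (subst mset_conv.commute) (simp add: mset_conv_def)
  also have "\<dots> = (\<Sum>a\<in>{a. a \<subseteq># M \<and> is_strict a}. (-1) ^ size a)"
    by (rule sum.mono_neutral_cong_right) (auto simp: finite_submultisets mu_def)
  also have "\<dots> = (\<Sum>A\<in>Pow (set_mset M). (-1) ^ card A)"
  proof (rule sum.reindex_bij_witness[where i = mset_set and j = set_mset])
    fix a assume "a \<in> {a. a \<subseteq># M \<and> is_strict a}"
    then show "mset_set (set_mset a) = a" "set_mset a \<in> Pow (set_mset M)"
      "(-1::rat) ^ card (set_mset a) = (-1) ^ size a"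
      by (auto simp: strict_multiset_eq_mset_set dest: set_mset_mono)
         (metis size_mset_set strict_multiset_eq_mset_set)
  next
    fix A assume A: "A \<in> Pow (set_mset M)"
    then have "finite A" by (meson PowD finite_set_mset finite_subset)
    with A show "set_mset (mset_set A) = A" "mset_set A \<in> {a. a \<subseteq># M \<and> is_strict a}"
      by (auto simp: subseteq_mset_def is_strict_def count_mset_set')
  qed
  also have "\<dots> = mset_delta M"
    by (simp add: sum_Pow_neg_one_power mset_delta_def)
  finally show "(1 \<star> mu) M = mset_delta M" .
qed

lemma odot_eq_mset_conv: "f \<odot> g = f \<star> g \<star> mu"
proof
  fix M
  have "(f \<star> g \<star> mu) M = (\<Sum>c\<in>{c. c \<subseteq># M}. \<Sum>a\<in>{a. a \<subseteq># c}. f a * g (c - a) * mu (M - c))"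
    unfolding mset_conv_def by (simp add: sum_distrib_right)
  also have "\<dots> = (f \<odot> g) M"
    unfolding odot_def by (rule sum_nested_submultisets)
  finally show "(f \<odot> g) M = (f \<star> g \<star> mu) M" ..
qed

lemma odot_one_right: "f \<odot> 1 = f"
  by (simp add: odot_eq_mset_conv mset_conv.assoc mset_conv_one_mu)

lemma odot_commute: "f \<odot> g = g \<odot> f"
  by (simp add: odot_eq_mset_conv mset_conv.commute)

lemma odot_one_left: "1 \<odot> f = f"
  by (simp add: odot_commute[of 1] odot_one_right)

lemma odot_add_left: "(f + g) \<odot> h = f \<odot> h + g \<odot> h"
  by (simp add: odot_eq_mset_conv mset_conv_add_left)

lemma odot_const_left: "(\<lambda>_. c) \<odot> f = (\<lambda>M. c * f M)"
proof -
  have "(\<lambda>_. c) \<odot> f = (\<lambda>M. c * (1::nat multiset \<Rightarrow> rat) M) \<odot> f"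
    by simp
  also have "\<dots> = (\<lambda>M. c * (1 \<odot> f) M)"
    by (simp only: odot_eq_mset_conv mset_conv_scale_left)
  finally show ?thesis
    by (simp add: odot_one_left)
qed

section \<open>Additive functions and the connected product\<close>

lemma additive_mult_mset_conv:
  fixes s :: "'a multiset \<Rightarrow> 'b::comm_semiring_1"
  assumes additive: "\<And>a b. s (a + b) = s a + s b"
  shows "s * (f \<star> g) = (s * f) \<star> g + f \<star> (s * g)"
proof
  fix M
  have "(s * (f \<star> g)) M
      = (\<Sum>a\<in>{a. a \<subseteq># M}. s a * f a * g (M - a) + f a * (s (M - a) * g (M - a)))"
    unfolding mset_conv_def times_fun_apply sum_distrib_left
  proof (rule sum.cong)
    fix a assume "a \<in> {a. a \<subseteq># M}"
    then show "s M * (f a * g (M - a)) = s a * f a * g (M - a) + f a * (s (M - a) * g (M - a))"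
      using additive[of a "M - a"] by (simp add: subset_mset.add_diff_inverse algebra_simps)
  qed simp
  then show "(s * (f \<star> g)) M = ((s * f) \<star> g + f \<star> (s * g)) M"
    by (simp add: mset_conv_def sum.distrib)
qed

lemma additive_times_mu:
  fixes s :: "nat multiset \<Rightarrow> rat"
  assumes additive: "\<And>a b. s (a + b) = s a + s b"
  shows "s * mu = - (s \<star> mu \<star> mu)"
proof -
  have "s {#} = 0"
    using additive[of "{#}" "{#}"] by simp
  then have "s * (1 \<star> mu) = 0"
    by (auto simp: mset_conv_one_mu mset_delta_def)
  then have "s \<star> mu + 1 \<star> (s * mu) = 0"
    by (simp add: additive_mult_mset_conv[OF additive])
  then have "(s \<star> mu + 1 \<star> (s * mu)) \<star> mu = 0"
    by (simp add: mset_conv_def fun_eq_iff)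
  moreover have "1 \<star> (s * mu) \<star> mu = s * mu"
    by (metis mset_conv.assoc mset_conv.commute mset_conv_one_mu mset_conv.left_neutral)
  ultimately have "s \<star> mu \<star> mu + s * mu = 0"
    by (simp add: mset_conv_add_left)
  then show ?thesis
    by (simp add: eq_neg_iff_add_eq_0 add.commute)
qed

lemma additive_odot_mu:
  fixes s :: "nat multiset \<Rightarrow> rat"
  assumes "\<And>a b. s (a + b) = s a + s b"
  shows "s \<odot> mu = - (s * mu)"
  by (simp add: odot_eq_mset_conv additive_times_mu[OF assms])

lemma additive_connected_product_leibniz:
  fixes s :: "nat multiset \<Rightarrow> rat"
  assumes additive: "\<And>a b. s (a + b) = s a + s b"
  shows "s * (f \<odot> g) - s \<star> mu \<star> (f \<odot> g)
       = (s * f - s \<star> mu \<star> f) \<odot> g + f \<odot> (s * g - s \<star> mu \<star> g)"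
proof -
  define P where "P = s \<star> mu"
  have "s * (f \<odot> g) = (s * f) \<star> g \<star> mu + f \<star> (s * g) \<star> mu - f \<star> g \<star> (P \<star> mu)"
    unfolding odot_eq_mset_conv P_def
    by (simp add: additive_mult_mset_conv[OF additive] additive_times_mu[OF additive]
        mset_conv_add_left mset_conv_minus_right)
  then show ?thesis
    unfolding odot_eq_mset_conv P_def[symmetric]
    by (simp add: mset_conv_add_left mset_conv_diff_left mset_conv_diff_right
        mset_conv.assoc mset_conv.commute mset_conv.left_commute)
qed

lemma S0_additive: "S0 m (a + b) = S0 m a + S0 m b"
  by (simp add: S0_def S_def)

lemma conn_eq: "conn m f = S0 m * f - S0 m \<star> mu \<star> f"
proof -
  define c where "c = S m {#}"
  have "S m = (\<lambda>_. c) + S0 m"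
    by (simp add: S0_def c_def fun_eq_iff)
  then have "S m \<odot> f = (\<lambda>_. c) \<odot> f + S0 m \<odot> f"
    by (simp only: odot_add_left)
  also have "\<dots> = (\<lambda>M. c * f M) + S0 m \<star> mu \<star> f"
    by (simp add: odot_const_left odot_eq_mset_conv mset_conv.assoc mset_conv.commute[of f mu])
  finally show ?thesis
    by (simp add: conn_def fun_eq_iff S0_def c_def algebra_simps)
qed

lemma conn_odot: "conn m (f \<odot> g) = conn m f \<odot> g + f \<odot> conn m g"
  unfolding conn_eq by (rule additive_connected_product_leibniz) (rule S0_additive)

lemma conn_linear: "conn m (\<lambda>M. a * f M + b * g M) = (\<lambda>M. a * conn m f M + b * conn m g M)"
  by (simp add: conn_eq fun_eq_iff mset_conv_def algebra_simps sum.distrib sum_distrib_left)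

lemma conn_const: "conn m (\<lambda>_. c) = 0"
  by (simp add: conn_def fun_eq_iff odot_commute[of "S m"] odot_const_left)

lemma conn_mset_conv_one: "conn m (f \<star> 1) = (S0 m * f) \<star> 1"
proof -
  have "S0 m \<star> mu \<star> (f \<star> 1) = S0 m \<star> f \<star> (1 \<star> mu)"
    by (simp only: mset_conv.assoc mset_conv.commute mset_conv.left_commute)
  then show ?thesis
    by (simp add: conn_eq additive_mult_mset_conv[OF S0_additive] mset_conv_one_mu
        mset_conv.commute[of f "S0 m"] fun_eq_iff)
qed

section \<open>The generators \<open>T k l\<close>\<close>

definition power_block :: "nat \<Rightarrow> nat \<Rightarrow> nat multiset \<Rightarrow> rat" where
  "power_block k l a = (if is_singleton (set_mset a)
     then of_nat (the_elem (set_mset a)) ^ k * of_nat (size a) ^ (l - 1) else 0)"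

lemma mset_conv_power_block_one:
  "(power_block k l \<star> 1) M = (\<Sum>n\<in>set_mset M. of_nat n ^ k * faulhaber l (count M n))"
proof -
  have "(power_block k l \<star> 1) M = (\<Sum>a\<in>{a. a \<subseteq># M \<and> is_singleton (set_mset a)}.
      of_nat (the_elem (set_mset a)) ^ k * of_nat (size a) ^ (l - 1))"
    unfolding mset_conv_def power_block_def
    by (rule sum.mono_neutral_cong_right) (auto simp: finite_submultisets)
  also have "\<dots> = (\<Sum>(n, r)\<in>Sigma (set_mset M) (\<lambda>n. {1..count M n}). of_nat n ^ k * of_nat r ^ (l - 1))"
  proof (rule sum.reindex_bij_witness[where i = "\<lambda>(n, r). replicate_mset r n"
                                          and j = "\<lambda>a. (the_elem (set_mset a), size a)"])
    fix a assume "a \<in> {a. a \<subseteq># M \<and> is_singleton (set_mset a)}"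
    then obtain n where a: "a \<subseteq># M" "set_mset a = {n}"
      by (auto simp: is_singleton_def)
    then have a_eq: "a = replicate_mset (size a) n"
      by (simp add: set_mset_subset_singletonD)
    have "1 \<le> size a"
      using a(2) by (cases a) auto
    moreover have "size a \<le> count M n"
      using a(1) a_eq count_le_replicate_mset_subset_eq by metis
    ultimately show "(case (the_elem (set_mset a), size a) of (n, r) \<Rightarrow> replicate_mset r n) = a"
      "(the_elem (set_mset a), size a) \<in> Sigma (set_mset M) (\<lambda>n. {1..count M n})"
      using a a_eq by (auto dest: mset_subset_eqD)
  qed (auto simp: count_le_replicate_mset_subset_eq)
  also have "\<dots> = (\<Sum>n\<in>set_mset M. of_nat n ^ k * faulhaber l (count M n))"
    by (simp add: sum.Sigma[symmetric] faulhaber_def sum_distrib_left)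
  finally show ?thesis .
qed

lemma T_eq_power_block: "T k l = (\<lambda>_. T k l {#}) + power_block k l \<star> 1"
  by (simp add: fun_eq_iff T_def mset_conv_power_block_one)

lemma S0_times_power_block:
  assumes "m \<ge> 1" "l \<ge> 1"
  shows "S0 m * power_block k l = power_block (k + m - 1) (l + 1)"
proof
  fix a
  show "(S0 m * power_block k l) a = power_block (k + m - 1) (l + 1) a"
  proof (cases "is_singleton (set_mset a)")
    case True
    then obtain n where n: "set_mset a = {n}"
      by (auto simp: is_singleton_def)
    define r where "r = size a"
    have a: "a = replicate_mset r n"
      using n by (simp add: r_def set_mset_subset_singletonD)
    have "r \<noteq> 0"
      using n a by (cases "r = 0") auto
    have "of_nat r * of_nat n ^ (m - 1) * (of_nat n ^ k * of_nat r ^ (l - 1))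
        = (of_nat n ^ (k + (m - 1)) * of_nat r ^ Suc (l - 1) :: rat)"
      by (simp add: power_add mult_ac)
    then show ?thesis
      using assms \<open>r \<noteq> 0\<close> by (simp add: a power_block_def S0_def S_def)
  qed (simp add: power_block_def)
qed

lemma conn_add: "conn m (f + g) = conn m f + conn m g"
  by (simp add: conn_eq mset_conv_add_right algebra_simps)

lemma conn_T:
  assumes "m \<ge> 2" "l \<ge> 1"
  shows "conn m (T k l) = T (k + m - 1) (l + 1)"
proof -
  have "T (k + m - 1) (l + 1) {#} = 0"
    using assms by (simp add: T_def)
  then have "T (k + m - 1) (l + 1) = power_block (k + m - 1) (l + 1) \<star> 1"
    using T_eq_power_block[of "k + m - 1" "l + 1"] by (simp add: fun_eq_iff)
  then show ?thesis
    using assms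
    by (subst T_eq_power_block)
       (simp add: conn_add conn_const conn_mset_conv_one S0_times_power_block)
qed

section \<open>Derivations of the induced product\<close>

lemma submultiset_partition: "M \<in> partitions \<Longrightarrow> a \<subseteq># M \<Longrightarrow> a \<in> partitions"
  unfolding partitions_def by (auto dest: mset_subset_eqD)

lemma odot_cong:
  assumes "\<And>a. a \<subseteq># M \<Longrightarrow> f a = f' a" "\<And>b. b \<subseteq># M \<Longrightarrow> g b = g' b"
  shows "(f \<odot> g) M = (f' \<odot> g') M"
proof -
  have "(f \<star> g) a = (f' \<star> g') a" if "a \<subseteq># M" for a
    using that by (intro mset_conv_cong assms) (auto intro: subset_mset.order_trans)
  then show ?thesis
    unfolding odot_eq_mset_conv by (rule mset_conv_cong) simp_all
qed

lemma odot_derivationD: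
  assumes "is_odot_derivation D" "M \<in> partitions"
  shows "D (\<lambda>x. a * f x + b * g x) M = a * D f M + b * D g M"
    and "D (f \<odot> g) M = (D f \<odot> g) M + (f \<odot> D g) M"
  using assms unfolding is_odot_derivation_def by simp_all

lemma odot_derivation_linear:
  assumes "is_odot_derivation D" "M \<in> partitions"
  shows "D (\<lambda>x. f x + g x) M = D f M + D g M" "D (\<lambda>x. c * f x) M = c * D f M"
  using odot_derivationD(1)[OF assms, of 1 f 1 g] odot_derivationD(1)[OF assms, of c f 0 f]
  by simp_all

lemma odot_derivation_const:
  assumes "is_odot_derivation D" "M \<in> partitions"
  shows "D (\<lambda>_. c) M = 0"
proof -
  have "D 1 M = D 1 M + D 1 M"
    using odot_derivationD(2)[OF assms, of 1 1] by (simp only: odot_one_left odot_one_right)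
  then have "D 1 M = 0"
    by simp
  then show ?thesis
    using odot_derivation_linear(2)[OF assms, of c 1] by simp
qed

lemma odot_derivations_eq_on_Tcal:
  assumes D: "is_odot_derivation D" and D': "is_odot_derivation D'"
    and generators: "\<And>k l M. l \<ge> 1 \<Longrightarrow> M \<in> partitions \<Longrightarrow> D (T k l) M = D' (T k l) M"
    and "f \<in> Tcal" "M \<in> partitions"
  shows "D f M = D' f M"
  using \<open>f \<in> Tcal\<close> \<open>M \<in> partitions\<close>
proof (induction arbitrary: M rule: Tcal.induct)
  case (const c)
  then show ?case
    using odot_derivation_const[OF D] odot_derivation_const[OF D'] by simp
next
  case (gen l k)
  then show ?case
    by (rule generators)
next
  case (add f g)
  then show ?case
    using odot_derivation_linear(1)[OF D] odot_derivation_linear(1)[OF D'] by simp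
next
  case (smult f c)
  then show ?case
    using odot_derivation_linear(2)[OF D] odot_derivation_linear(2)[OF D'] by simp
next
  case (prod f g)
  have "(D f \<odot> g) M = (D' f \<odot> g) M" "(f \<odot> D g) M = (f \<odot> D' g) M"
    by (rule odot_cong; simp add: prod.IH submultiset_partition[OF prod.prems])+
  then show ?case
    using odot_derivationD(2)[OF D prod.prems] odot_derivationD(2)[OF D' prod.prems] by simp
qed

theorem lemma5p1p2:
  fixes m :: nat
  assumes "even m" and "m \<ge> 2"
  shows "(\<forall>lam\<in>partitions. (S0 m \<odot> mu) lam = - (S0 m lam * mu lam))
       \<and> is_odot_derivation (conn m)
       \<and> (\<forall>k l. l \<ge> 1 \<longrightarrow> (\<forall>lam\<in>partitions. conn m (T k l) lam = T (k + m - 1) (l + 1) lam))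
       \<and> (\<forall>D. is_odot_derivation D
              \<and> (\<forall>k l. l \<ge> 1 \<longrightarrow> (\<forall>lam\<in>partitions. D (T k l) lam = T (k + m - 1) (l + 1) lam))
              \<longrightarrow> (\<forall>f\<in>Tcal. \<forall>lam\<in>partitions. D f lam = conn m f lam))"
proof -
  have odot_mu: "S0 m \<odot> mu = - (S0 m * mu)"
    by (rule additive_odot_mu) (rule S0_additive)
  have derivation: "is_odot_derivation (conn m)"
    unfolding is_odot_derivation_def by (simp add: conn_linear conn_odot)
  have generators: "conn m (T k l) = T (k + m - 1) (l + 1)" if "l \<ge> 1" for k l
    using \<open>m \<ge> 2\<close> that by (rule conn_T)
  show ?thesis
  proof (intro conjI allI impI ballI)
    fix D f M
    assume hyp: "is_odot_derivation D
      \<and> (\<forall>k l. l \<ge> 1 \<longrightarrow> (\<forall>lam\<in>partitions. D (T k l) lam = T (k + m - 1) (l + 1) lam))"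
      and "f \<in> Tcal" "M \<in> partitions"
    have "D (T k l) M' = conn m (T k l) M'" if "l \<ge> 1" "M' \<in> partitions" for k l M'
      using hyp that generators by simp
    with hyp \<open>f \<in> Tcal\<close> \<open>M \<in> partitions\<close> show "D f M = conn m f M"
      using odot_derivations_eq_on_Tcal[OF _ derivation] by blast
  qed (simp_all add: odot_mu derivation generators)
qed

end
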